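(* Let \[K_2=\langle x,t \mid [x,\ txt^{-1}\,x\,tx^{-1}t^{-1}],\ t^2\rangle.\] Then the subgroup $\langle x, txt^{-1}\rangle$ of $K_2$ is isomorphic to the (integral) Heisenberg group $\langle a,b\mid [a,[a,b]],[b,[a,b]]\rangle$, and it has index $2$ in $K_2$ with transversal $\{1,t\}$.
   Context: Commutator convention: $[u,v]=uvu^{-1}v^{-1}$; a relator $r$ in a presentation means $r=1$. *)

theory Defs
  imports "HOL-Algebra.Coset" "HOL-Algebra.Generated_Groups"
begin

text \<open>Words in a free group on generators of type 'g: letters (True,g) = g, (False,g) = g inverse.\<close>
type_synonym 'g word = "(bool \<times> 'g) list"

definition winv :: "'g word \<Rightarrow> 'g word" where
  "winv w = rev (map (\<lambda>(b,g). (\<not> b, g)) w)"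

definition wcomm :: "'g word \<Rightarrow> 'g word \<Rightarrow> 'g word" where
  "wcomm u v = u @ v @ winv u @ winv v"

inductive_set pres_rel :: "'g word set \<Rightarrow> ('g word \<times> 'g word) set" for Rs where
  prefl: "(w, w) \<in> pres_rel Rs"
| psym: "(u, v) \<in> pres_rel Rs \<Longrightarrow> (v, u) \<in> pres_rel Rs"
| ptrans: "(u, v) \<in> pres_rel Rs \<Longrightarrow> (v, w) \<in> pres_rel Rs \<Longrightarrow> (u, w) \<in> pres_rel Rs"
| pcancel: "(u @ [(b, g), (\<not> b, g)] @ v, u @ v) \<in> pres_rel Rs"
| prelator: "r \<in> Rs \<Longrightarrow> (u @ r @ v, u @ v) \<in> pres_rel Rs"

definition word_class :: "'g word set \<Rightarrow> 'g word \<Rightarrow> 'g word set" where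
  "word_class Rs w = pres_rel Rs `` {w}"

definition presented_group :: "'g word set \<Rightarrow> ('g word set) monoid" where
  "presented_group Rs =
     \<lparr> carrier = UNIV // pres_rel Rs,
       monoid.mult = (\<lambda>A B. \<Union>a\<in>A. \<Union>b\<in>B. word_class Rs (a @ b)),
       one = word_class Rs [] \<rparr>"

datatype gen2 = G1 | G2

definition gw1 :: "gen2 word" where "gw1 = [(True, G1)]"
definition gw2 :: "gen2 word" where "gw2 = [(True, G2)]"

definition K2_rels :: "gen2 word set" where
  "K2_rels = { wcomm gw1 (gw2 @ gw1 @ winv gw2 @ gw1 @ gw2 @ winv gw1 @ winv gw2),
               gw2 @ gw2 }"

definition K2 :: "(gen2 word set) monoid" where "K2 = presented_group K2_rels"
definition K2_x :: "gen2 word set" where "K2_x = word_class K2_rels gw1"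
definition K2_t :: "gen2 word set" where "K2_t = word_class K2_rels gw2"

definition Heis_rels :: "gen2 word set" where
  "Heis_rels = { wcomm gw1 (wcomm gw1 gw2), wcomm gw2 (wcomm gw1 gw2) }"

definition Heis :: "(gen2 word set) monoid" where "Heis = presented_group Heis_rels"

end

theory Submission
  imports Defs
begin

text \<open>
  Put \<open>z = t x t\<inverse>\<close>. The relator says that \<open>x\<close> commutes with \<open>z x z\<inverse>\<close>;
  conjugating by the involution \<open>t\<close>, which swaps \<open>x\<close> and \<open>z\<close>, shows that \<open>z\<close> commutes
  with \<open>x z x\<inverse>\<close>. Hence \<open>[x, z]\<close> commutes with \<open>x\<close> and \<open>z\<close>, and \<open>a \<mapsto> x, b \<mapsto> z\<close>
  defines a homomorphism from the Heisenberg group onto \<open>H = \<langle>x, z\<rangle>\<close>.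

  To see that it is injective and that \<open>t \<notin> H\<close>, map \<open>K\<^sub>2\<close> to a concrete model: the
  semidirect product of \<open>\<int>\<^sup>3\<close> (the Heisenberg group in the coordinates
  \<open>a\<^sup>i b\<^sup>j [a,b]\<^sup>k\<close>) with the involution induced by \<open>a \<leftrightarrow> b\<close>, sending \<open>x\<close> to \<open>a\<close> and
  \<open>t\<close> to the involution. Every element of the Heisenberg group is \<open>a\<^sup>i b\<^sup>j [a,b]\<^sup>k\<close>,
  so it is determined by its image in the model, while \<open>t\<close> is mapped outside the image of \<open>H\<close>.

  Finally \<open>t\<close> normalises \<open>H\<close> and \<open>t\<^sup>2 = 1\<close>, so \<open>H \<union> H t\<close> is closed under left
  multiplication by the generators and their inverses and therefore is all of \<open>K\<^sub>2\<close>.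
\<close>

section \<open>Presented groups\<close>

abbreviation pres_gen :: "'g word set \<Rightarrow> 'g \<Rightarrow> 'g word set" where
  "pres_gen Rs g \<equiv> word_class Rs [(True, g)]"

lemma pres_rel_refl [simp]: "(w, w) \<in> pres_rel Rs"
  by (rule prefl)

lemma pres_rel_append_left: "(u, v) \<in> pres_rel Rs \<Longrightarrow> (p @ u, p @ v) \<in> pres_rel Rs"
proof (induction rule: pres_rel.induct)
  case (pcancel u b g v)
  show ?case using pres_rel.pcancel[of "p @ u" b g v Rs] by simp
next
  case (prelator r u v)
  show ?case using pres_rel.prelator[OF prelator, of "p @ u" v] by simp
qed (simp | blast intro: psym ptrans)+

lemma pres_rel_append_right: "(u, v) \<in> pres_rel Rs \<Longrightarrow> (u @ q, v @ q) \<in> pres_rel Rs"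
proof (induction rule: pres_rel.induct)
  case (pcancel u b g v)
  show ?case using pres_rel.pcancel[of u b g "v @ q" Rs] by simp
next
  case (prelator r u v)
  show ?case using pres_rel.prelator[OF prelator, of u "v @ q"] by simp
qed (simp | blast intro: psym ptrans)+

lemma pres_rel_append:
  "(u, u') \<in> pres_rel Rs \<Longrightarrow> (v, v') \<in> pres_rel Rs \<Longrightarrow> (u @ v, u' @ v') \<in> pres_rel Rs"
  by (meson pres_rel_append_left pres_rel_append_right ptrans)

lemma pres_rel_equiv: "equiv UNIV (pres_rel Rs)"
  by (rule equivI) (simp_all add: refl_on_def sym_def trans_def psym, metis ptrans)

lemma word_class_eq_iff: "word_class Rs u = word_class Rs v \<longleftrightarrow> (u, v) \<in> pres_rel Rs"
  unfolding word_class_def by (simp add: equiv_class_eq_iff[OF pres_rel_equiv])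

lemma mem_word_class_iff: "u \<in> word_class Rs v \<longleftrightarrow> (v, u) \<in> pres_rel Rs"
  by (simp add: word_class_def)

lemma carrier_presented_group: "carrier (presented_group Rs) = range (word_class Rs)"
  by (auto simp: presented_group_def quotient_def word_class_def)

lemma one_presented_group: "\<one>\<^bsub>presented_group Rs\<^esub> = word_class Rs []"
  by (simp add: presented_group_def)

lemma word_class_mult:
  "word_class Rs u \<otimes>\<^bsub>presented_group Rs\<^esub> word_class Rs v = word_class Rs (u @ v)"
proof -
  have "word_class Rs (u' @ v') = word_class Rs (u @ v)"
    if "u' \<in> word_class Rs u" "v' \<in> word_class Rs v" for u' v'
    using that pres_rel_append[of u u' Rs v v']
    by (simp add: mem_word_class_iff word_class_eq_iff psym)
  moreover have "u \<in> word_class Rs u" "v \<in> word_class Rs v"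
    by (simp_all add: mem_word_class_iff)
  ultimately have "(\<Union>u'\<in>word_class Rs u. \<Union>v'\<in>word_class Rs v. word_class Rs (u' @ v')) =
      word_class Rs (u @ v)"
    by blast
  then show ?thesis
    unfolding presented_group_def by simp
qed

lemma winv_append_cancel: "(winv w @ w, []) \<in> pres_rel Rs"
proof (induction w)
  case (Cons l w)
  obtain b g where l: "l = (b, g)" by force
  have "(winv w @ [(\<not> b, g), (\<not> \<not> b, g)] @ w, winv w @ w) \<in> pres_rel Rs"
    by (rule pcancel)
  then have "(winv (l # w) @ l # w, winv w @ w) \<in> pres_rel Rs"
    by (simp add: winv_def l)
  then show ?case using Cons ptrans by blast
qed (simp add: winv_def)

lemma group_presented_group: "group (presented_group Rs)"
proof (rule groupI)
  fix x assume "x \<in> carrier (presented_group Rs)"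
  then obtain u where u: "x = word_class Rs u" by (auto simp: carrier_presented_group)
  have "word_class Rs (winv u) \<otimes>\<^bsub>presented_group Rs\<^esub> x = \<one>\<^bsub>presented_group Rs\<^esub>"
    by (simp add: u one_presented_group word_class_mult word_class_eq_iff winv_append_cancel)
  then show "\<exists>y\<in>carrier (presented_group Rs). y \<otimes>\<^bsub>presented_group Rs\<^esub> x = \<one>\<^bsub>presented_group Rs\<^esub>"
    by (auto simp: carrier_presented_group)
next
  fix x y z assume "x \<in> carrier (presented_group Rs)" "y \<in> carrier (presented_group Rs)"
    "z \<in> carrier (presented_group Rs)"
  then show "x \<otimes>\<^bsub>presented_group Rs\<^esub> y \<otimes>\<^bsub>presented_group Rs\<^esub> z =
      x \<otimes>\<^bsub>presented_group Rs\<^esub> (y \<otimes>\<^bsub>presented_group Rs\<^esub> z)"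
    by (auto simp: carrier_presented_group word_class_mult)
qed (auto simp: carrier_presented_group word_class_mult one_presented_group)

lemma inv_word_class: "inv\<^bsub>presented_group Rs\<^esub> (word_class Rs w) = word_class Rs (winv w)"
  by (rule group.inv_equality[OF group_presented_group])
    (auto simp: one_presented_group word_class_mult word_class_eq_iff winv_append_cancel
      carrier_presented_group)

text \<open>Not a simp rule: \<open>pres_gen Rs g\<close> on the right is itself an instance of the left-hand side.\<close>

lemma word_class_Cons:
  "word_class Rs ((b, g) # w) =
     (if b then pres_gen Rs g else inv\<^bsub>presented_group Rs\<^esub> (pres_gen Rs g))
     \<otimes>\<^bsub>presented_group Rs\<^esub> word_class Rs w"
  by (simp add: inv_word_class winv_def word_class_mult)

lemma word_class_relator: "r \<in> Rs \<Longrightarrow> word_class Rs r = \<one>\<^bsub>presented_group Rs\<^esub>"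
  using prelator[of r Rs "[]" "[]"] by (simp add: one_presented_group word_class_eq_iff)

lemma presented_group_induct [consumes 1, case_names one gen gen_inv]:
  assumes "x \<in> carrier (presented_group Rs)"
    and "P \<one>\<^bsub>presented_group Rs\<^esub>"
    and "\<And>g y. y \<in> carrier (presented_group Rs) \<Longrightarrow> P y \<Longrightarrow>
           P (pres_gen Rs g \<otimes>\<^bsub>presented_group Rs\<^esub> y)"
    and "\<And>g y. y \<in> carrier (presented_group Rs) \<Longrightarrow> P y \<Longrightarrow>
           P (inv\<^bsub>presented_group Rs\<^esub> (pres_gen Rs g) \<otimes>\<^bsub>presented_group Rs\<^esub> y)"
  shows "P x"
proof -
  obtain w where x: "x = word_class Rs w"
    using assms(1) by (auto simp: carrier_presented_group)
  have "P (word_class Rs w)"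
  proof (induction w)
    case Nil
    then show ?case using assms(2) by (simp add: one_presented_group)
  next
    case (Cons l w)
    obtain b g where l: "l = (b, g)" by force
    have "word_class Rs w \<in> carrier (presented_group Rs)"
      by (simp add: carrier_presented_group)
    with Cons.IH show ?case
      unfolding l word_class_Cons[of Rs b g w] by (cases b) (simp_all add: assms(3,4))
  qed
  then show ?thesis by (simp add: x)
qed

lemma generate_presented_group:
  "generate (presented_group Rs) (range (pres_gen Rs)) = carrier (presented_group Rs)"
proof
  interpret group "presented_group Rs" by (rule group_presented_group)
  show "generate (presented_group Rs) (range (pres_gen Rs)) \<subseteq> carrier (presented_group Rs)"
    by (rule generate_incl) (auto simp: carrier_presented_group)
  show "carrier (presented_group Rs) \<subseteq> generate (presented_group Rs) (range (pres_gen Rs))"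
  proof
    fix x assume "x \<in> carrier (presented_group Rs)"
    then show "x \<in> generate (presented_group Rs) (range (pres_gen Rs))"
    proof (induction rule: presented_group_induct)
      case one then show ?case by (rule generate.one)
    next
      case (gen g y) then show ?case by (blast intro: generate.eng generate.incl)
    next
      case (gen_inv g y) then show ?case by (blast intro: generate.eng generate.inv)
    qed
  qed
qed

lemma hom_presented_group_eqI:
  assumes "group H" and f: "f \<in> hom (presented_group Rs) H" and h: "h \<in> hom (presented_group Rs) H"
    and gen: "\<And>g. f (pres_gen Rs g) = h (pres_gen Rs g)"
    and x: "x \<in> carrier (presented_group Rs)"
  shows "f x = h x"
proof -
  interpret P: group "presented_group Rs" by (rule group_presented_group)
  interpret f: group_hom "presented_group Rs" H f
    using assms by (simp add: group_hom_def group_hom_axioms_def P.is_group)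
  interpret h: group_hom "presented_group Rs" H h
    using assms by (simp add: group_hom_def group_hom_axioms_def P.is_group)
  have gen_closed: "pres_gen Rs g \<in> carrier (presented_group Rs)" for g
    by (simp add: carrier_presented_group)
  from x show ?thesis
    by (induction rule: presented_group_induct) (simp_all add: gen gen_closed)
qed

section \<open>Commutators, conjugation and powers\<close>

definition commutator :: "('a, 'm) monoid_scheme \<Rightarrow> 'a \<Rightarrow> 'a \<Rightarrow> 'a" where
  "commutator G x y = x \<otimes>\<^bsub>G\<^esub> y \<otimes>\<^bsub>G\<^esub> inv\<^bsub>G\<^esub> x \<otimes>\<^bsub>G\<^esub> inv\<^bsub>G\<^esub> y"

context group
begin

lemma commutator_closed [simp]:
  "x \<in> carrier G \<Longrightarrow> y \<in> carrier G \<Longrightarrow> commutator G x y \<in> carrier G"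
  by (simp add: commutator_def)

lemma inv_mult_cancel_left [simp]:
  "x \<in> carrier G \<Longrightarrow> y \<in> carrier G \<Longrightarrow> inv x \<otimes> (x \<otimes> y) = y"
  by (simp add: m_assoc [symmetric])

lemma mult_inv_cancel_left [simp]:
  "x \<in> carrier G \<Longrightarrow> y \<in> carrier G \<Longrightarrow> x \<otimes> (inv x \<otimes> y) = y"
  by (simp add: m_assoc [symmetric])

lemma commutator_mult_swap:
  "x \<in> carrier G \<Longrightarrow> y \<in> carrier G \<Longrightarrow> commutator G x y \<otimes> (y \<otimes> x) = x \<otimes> y"
  by (simp add: commutator_def m_assoc)

lemma commutator_eq_one_iff:
  assumes "x \<in> carrier G" "y \<in> carrier G"
  shows "commutator G x y = \<one> \<longleftrightarrow> x \<otimes> y = y \<otimes> x"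
  using assms commutator_mult_swap[OF assms] r_cancel_one[of "y \<otimes> x" "commutator G x y"] by auto

lemma commute_mult:
  "\<lbrakk>x \<in> carrier G; y \<in> carrier G; z \<in> carrier G; x \<otimes> y = y \<otimes> x; x \<otimes> z = z \<otimes> x\<rbrakk>
   \<Longrightarrow> x \<otimes> (y \<otimes> z) = y \<otimes> z \<otimes> x"
  by (metis m_assoc)

lemma conj_group_hom: "g \<in> carrier G \<Longrightarrow> group_hom G G (\<lambda>x. g \<otimes> x \<otimes> inv g)"
  unfolding group_hom_def group_hom_axioms_def
  by (auto intro!: homI simp: is_group m_assoc)

lemma conj_int_pow:
  "g \<in> carrier G \<Longrightarrow> x \<in> carrier G \<Longrightarrow> g \<otimes> x [^] (i::int) \<otimes> inv g = (g \<otimes> x \<otimes> inv g) [^] i"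
  using group_hom.hom_int_pow[OF conj_group_hom] by blast

lemma int_pow_commute:
  assumes x: "x \<in> carrier G" and y: "y \<in> carrier G" and xy: "x \<otimes> y = y \<otimes> x"
  shows "x [^] (i::int) \<otimes> y = y \<otimes> x [^] i"
proof -
  have "y \<otimes> x \<otimes> inv y = x"
    using x y by (simp flip: xy add: m_assoc)
  then have "y \<otimes> x [^] i \<otimes> inv y = x [^] i"
    by (simp add: conj_int_pow x y)
  then show ?thesis
    using x y by (simp add: inv_solve_right')
qed

lemma commute_inv:
  "x \<in> carrier G \<Longrightarrow> y \<in> carrier G \<Longrightarrow> x \<otimes> y = y \<otimes> x \<Longrightarrow> x \<otimes> inv y = inv y \<otimes> x"
  using int_pow_commute[of y x "-1"] by (simp add: int_pow_neg)

lemma int_pows_commute: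
  assumes "x \<in> carrier G" "y \<in> carrier G" "x \<otimes> y = y \<otimes> x"
  shows "x [^] (i::int) \<otimes> y [^] (j::int) = y [^] j \<otimes> x [^] i"
  using assms int_pow_commute[of y "x [^] i" j] int_pow_commute[of x y i] by simp

lemma conj_int_pow_twisted:
  assumes x: "x \<in> carrier G" and g: "g \<in> carrier G" and d: "d \<in> carrier G"
    and conj: "g \<otimes> x = d \<otimes> x \<otimes> g" and dx: "d \<otimes> x = x \<otimes> d"
  shows "g \<otimes> x [^] (i::int) = d [^] i \<otimes> x [^] i \<otimes> g"
proof -
  have "g \<otimes> x \<otimes> inv g = d \<otimes> x"
    using x g d conj by (simp add: inv_solve_right')
  then have "g \<otimes> x [^] i \<otimes> inv g = d [^] i \<otimes> x [^] i"
    by (simp add: conj_int_pow x g int_pow_mult_distrib[OF dx d x])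
  then show ?thesis
    using x g d by (simp add: inv_solve_right')
qed

lemma int_pow_commutation:
  assumes x: "x \<in> carrier G" and y: "y \<in> carrier G" and d: "d \<in> carrier G"
    and yx: "y \<otimes> x = d \<otimes> x \<otimes> y" and dx: "d \<otimes> x = x \<otimes> d" and dy: "d \<otimes> y = y \<otimes> d"
  shows "y [^] (j::int) \<otimes> x [^] (i::int) = d [^] (i * j) \<otimes> x [^] i \<otimes> y [^] j"
proof -
  define X where "X = x [^] i"
  have X: "X \<in> carrier G" using x by (simp add: X_def)
  have dX: "d [^] i \<otimes> X = X \<otimes> d [^] i"
    unfolding X_def using int_pows_commute[OF d x dx] .
  have yX: "y \<otimes> X = X \<otimes> d [^] i \<otimes> y"
    unfolding X_def using conj_int_pow_twisted[OF x y d yx dx] dX by (simp add: X_def)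
  txt \<open>So conjugation by \<open>inv X\<close> multiplies \<open>y\<close> by \<open>d [^] i\<close>; apply the twisted rule again.\<close>
  have "inv X \<otimes> y = inv X \<otimes> (y \<otimes> X) \<otimes> inv X"
    using X y by (simp add: m_assoc)
  also have "\<dots> = d [^] i \<otimes> y \<otimes> inv X"
    using X y d by (simp add: yX m_assoc)
  finally have "inv X \<otimes> y = d [^] i \<otimes> y \<otimes> inv X" .
  moreover have "d [^] i \<otimes> y = y \<otimes> d [^] i"
    using int_pow_commute[OF d y dy] .
  ultimately have yjX: "inv X \<otimes> y [^] j = d [^] (i * j) \<otimes> y [^] j \<otimes> inv X"
    using conj_int_pow_twisted[of y "inv X" "d [^] i"] X y d by (simp add: int_pow_pow)
  have "y [^] j \<otimes> X = X \<otimes> (inv X \<otimes> y [^] j) \<otimes> X"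
    using X y by (simp add: m_assoc)
  also have "\<dots> = X \<otimes> d [^] (i * j) \<otimes> y [^] j"
    using X y d by (simp add: yjX m_assoc)
  finally have "y [^] j \<otimes> X = X \<otimes> d [^] (i * j) \<otimes> y [^] j" .
  then show ?thesis
    using int_pows_commute[OF d x dx, of "i * j" i] by (simp add: X_def)
qed

lemma commutator_commutes_of_involution:
  assumes x: "x \<in> carrier G" and t: "t \<in> carrier G" and tt: "t \<otimes> t = \<one>"
    and z: "z = t \<otimes> x \<otimes> inv t"
    and rel: "x \<otimes> (z \<otimes> x \<otimes> inv z) = z \<otimes> x \<otimes> inv z \<otimes> x"
  shows "x \<otimes> commutator G x z = commutator G x z \<otimes> x"
    and "z \<otimes> commutator G x z = commutator G x z \<otimes> z"
proof -
  have zc: "z \<in> carrier G" using x t z by simp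
  have inv_t: "inv t = t" using tt t by (simp add: inv_equality)
  interpret conj: group_hom G G "\<lambda>g. t \<otimes> g \<otimes> inv t" by (rule conj_group_hom[OF t])
  have tt_cancel: "t \<otimes> (t \<otimes> y) = y" if "y \<in> carrier G" for y
    using t that by (simp add: tt flip: m_assoc)
  have conj_z: "t \<otimes> z \<otimes> inv t = x"
    using x t by (simp add: z inv_t m_assoc tt tt_cancel)
  have "commutator G x z = x \<otimes> inv (z \<otimes> x \<otimes> inv z)"
    using x zc by (simp add: commutator_def inv_mult_group m_assoc)
  then show "x \<otimes> commutator G x z = commutator G x z \<otimes> x"
    using x zc commute_mult[OF x x _ refl commute_inv[OF x _ rel]] by simp
  txt \<open>Conjugating \<open>rel\<close> by \<open>t\<close> swaps the roles of \<open>x\<close> and \<open>z\<close>.\<close>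
  have "z \<otimes> (x \<otimes> z \<otimes> inv x) = x \<otimes> z \<otimes> inv x \<otimes> z"
    using conj.hom_mult[of x "z \<otimes> x \<otimes> inv z"] conj.hom_mult[of "z \<otimes> x \<otimes> inv z" x] rel x zc
    by (simp add: conj.hom_mult conj.hom_inv z[symmetric] conj_z)
  moreover have "commutator G x z = (x \<otimes> z \<otimes> inv x) \<otimes> inv z"
    using x zc by (simp add: commutator_def)
  ultimately show "z \<otimes> commutator G x z = commutator G x z \<otimes> z"
    using x zc commute_mult[OF zc _ _ _ commute_inv[OF zc zc refl], of "x \<otimes> z \<otimes> inv x"] by simp
qed

end

section \<open>Evaluating words and von Dyck's theorem\<close>

definition eval_word :: "('a, 'm) monoid_scheme \<Rightarrow> ('g \<Rightarrow> 'a) \<Rightarrow> 'g word \<Rightarrow> 'a" where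
  "eval_word H f w =
     foldr (\<lambda>(b, g) y. (if b then f g else inv\<^bsub>H\<^esub> (f g)) \<otimes>\<^bsub>H\<^esub> y) w \<one>\<^bsub>H\<^esub>"

text \<open>Evaluates an arbitrary representative of the class, so it is well defined only when every
  relator evaluates to \<open>\<one>\<close>.\<close>

definition pres_lift :: "('a, 'm) monoid_scheme \<Rightarrow> ('g \<Rightarrow> 'a) \<Rightarrow> 'g word set \<Rightarrow> 'a" where
  "pres_lift H f A = eval_word H f (SOME w. w \<in> A)"

lemma eval_word_Nil [simp]: "eval_word H f [] = \<one>\<^bsub>H\<^esub>"
  by (simp add: eval_word_def)

lemma eval_word_Cons [simp]:
  "eval_word H f ((b, g) # w) = (if b then f g else inv\<^bsub>H\<^esub> (f g)) \<otimes>\<^bsub>H\<^esub> eval_word H f w"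
  by (simp add: eval_word_def)

lemma word_class_eq_eval_word:
  "word_class Rs w = eval_word (presented_group Rs) (pres_gen Rs) w"
proof (induction w)
  case Nil
  then show ?case by (simp add: one_presented_group)
next
  case (Cons l w)
  obtain b g where "l = (b, g)" by force
  with Cons.IH show ?case by (simp add: word_class_Cons[of Rs b g w])
qed

lemma eval_word_relator:
  "r \<in> Rs \<Longrightarrow> eval_word (presented_group Rs) (pres_gen Rs) r = \<one>\<^bsub>presented_group Rs\<^esub>"
  by (simp add: word_class_relator flip: word_class_eq_eval_word)

context group
begin

lemma eval_word_closed [simp]: "(\<And>g. f g \<in> carrier G) \<Longrightarrow> eval_word G f w \<in> carrier G"
proof (induction w)
  case (Cons l w)
  then show ?case by (cases l) auto
qed simp

lemma eval_word_append:
  "(\<And>g. f g \<in> carrier G) \<Longrightarrow> eval_word G f (u @ v) = eval_word G f u \<otimes> eval_word G f v"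
proof (induction u)
  case (Cons l u)
  then show ?case by (cases l) (auto simp: m_assoc)
qed simp

lemma eval_word_winv:
  "(\<And>g. f g \<in> carrier G) \<Longrightarrow> eval_word G f (winv w) = inv (eval_word G f w)"
proof (induction w)
  case (Cons l w)
  obtain b g where "l = (b, g)" by force
  with Cons show ?case
    by (auto simp: winv_def eval_word_append inv_mult_group)
qed (simp add: winv_def)

lemma eval_word_wcomm:
  "(\<And>g. f g \<in> carrier G) \<Longrightarrow>
   eval_word G f (wcomm u v) = commutator G (eval_word G f u) (eval_word G f v)"
  by (simp add: wcomm_def commutator_def eval_word_append eval_word_winv m_assoc)

lemma eval_word_respects_pres_rel:
  assumes f: "\<And>g. f g \<in> carrier G" and rel: "\<And>r. r \<in> Rs \<Longrightarrow> eval_word G f r = \<one>"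
    and uv: "(u, v) \<in> pres_rel Rs"
  shows "eval_word G f u = eval_word G f v"
  using uv
proof (induction rule: pres_rel.induct)
  case (pcancel u b g v)
  show ?case
    using f by (cases b) (simp_all add: eval_word_append)
next
  case (prelator r u v)
  then show ?case
    using f rel by (simp add: eval_word_append del: eval_word_Cons)
qed simp_all

lemma pres_lift_word_class:
  assumes "\<And>g. f g \<in> carrier G" and "\<And>r. r \<in> Rs \<Longrightarrow> eval_word G f r = \<one>"
  shows "pres_lift G f (word_class Rs w) = eval_word G f w"
proof -
  have "(w, SOME v. v \<in> word_class Rs w) \<in> pres_rel Rs"
    using someI[of "\<lambda>v. v \<in> word_class Rs w" w] by (simp add: mem_word_class_iff)
  then show ?thesis
    unfolding pres_lift_def using eval_word_respects_pres_rel[OF assms] by metis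
qed

lemma pres_lift_gen:
  assumes "\<And>g. f g \<in> carrier G" and "\<And>r. r \<in> Rs \<Longrightarrow> eval_word G f r = \<one>"
  shows "pres_lift G f (pres_gen Rs g) = f g"
  using assms by (auto simp: pres_lift_word_class)

lemma pres_lift_hom:
  assumes "\<And>g. f g \<in> carrier G" and "\<And>r. r \<in> Rs \<Longrightarrow> eval_word G f r = \<one>"
  shows "pres_lift G f \<in> hom (presented_group Rs) G"
proof (rule homI)
  fix x y assume "x \<in> carrier (presented_group Rs)" "y \<in> carrier (presented_group Rs)"
  then obtain u v where "x = word_class Rs u" "y = word_class Rs v"
    by (auto simp: carrier_presented_group)
  then show "pres_lift G f (x \<otimes>\<^bsub>presented_group Rs\<^esub> y) = pres_lift G f x \<otimes> pres_lift G f y"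
    using assms by (simp add: word_class_mult pres_lift_word_class eval_word_append)
qed (use assms in \<open>auto simp: carrier_presented_group pres_lift_word_class\<close>)

end

lemma commute_of_wcomm_relator:
  assumes "wcomm u v \<in> Rs"
  shows "eval_word (presented_group Rs) (pres_gen Rs) u \<otimes>\<^bsub>presented_group Rs\<^esub>
           eval_word (presented_group Rs) (pres_gen Rs) v =
         eval_word (presented_group Rs) (pres_gen Rs) v \<otimes>\<^bsub>presented_group Rs\<^esub>
           eval_word (presented_group Rs) (pres_gen Rs) u"
proof -
  interpret group "presented_group Rs" by (rule group_presented_group)
  have gen: "pres_gen Rs g \<in> carrier (presented_group Rs)" for g
    by (simp add: carrier_presented_group)
  show ?thesis
    using eval_word_relator[OF assms] eval_word_wcomm[of "pres_gen Rs" u v]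
    by (simp add: gen commutator_eq_one_iff)
qed

section \<open>Cosets and images\<close>

context group
begin

lemma mult_mem_union_rcoset:
  assumes H: "subgroup H G" and t: "t \<in> carrier G" and tt: "t \<otimes> t = \<one>"
    and conj: "\<And>h. h \<in> H \<Longrightarrow> t \<otimes> h \<otimes> inv t \<in> H"
    and g: "g \<in> H \<union> {t}" and y: "y \<in> H \<union> (H #> t)"
  shows "g \<otimes> y \<in> H \<union> (H #> t)"
proof -
  have HG: "h \<in> H \<Longrightarrow> h \<in> carrier G" for h
    by (rule subgroup.mem_carrier[OF H])
  have inv_t: "inv t = t" using tt t by (simp add: inv_equality)
  have rcos: "h \<otimes> t \<in> H #> t" if "h \<in> H" for h
    using that by (auto simp: r_coset_def)
  have y_cases: "y \<in> H \<or> (\<exists>h\<in>H. y = h \<otimes> t)"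
    using y unfolding r_coset_def by blast
  show ?thesis
  proof (cases "g = t")
    case False
    from g False have gH: "g \<in> H" by simp
    from y_cases show ?thesis
    proof
      assume "y \<in> H"
      with subgroup.m_closed[OF H gH] have "g \<otimes> y \<in> H" .
      then show ?thesis by (rule UnI1)
    next
      assume "\<exists>h\<in>H. y = h \<otimes> t"
      then obtain h where h: "h \<in> H" "y = h \<otimes> t" by blast
      then have "g \<otimes> y = (g \<otimes> h) \<otimes> t" using gH t by (simp add: HG m_assoc)
      then show ?thesis using gH h subgroup.m_closed[OF H] rcos by simp
    qed
  next
    case True
    from y_cases show ?thesis
    proof
      assume yH: "y \<in> H"
      then have "g \<otimes> y = (t \<otimes> y \<otimes> inv t) \<otimes> t" using True t by (simp add: HG m_assoc)
      then show ?thesis using yH conj rcos by simp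
    next
      assume "\<exists>h\<in>H. y = h \<otimes> t"
      then obtain h where h: "h \<in> H" "y = h \<otimes> t" by blast
      then have "g \<otimes> y = t \<otimes> h \<otimes> inv t" using True t tt by (simp add: HG inv_t m_assoc)
      then show ?thesis using h conj by simp
    qed
  qed
qed

lemma rcosets_eq_pair:
  assumes H: "subgroup H G" and t: "t \<in> carrier G" and "t \<notin> H"
    and cover: "carrier G \<subseteq> H \<union> (H #> t)"
  shows "rcosets H = {H, H #> t}" and "H \<noteq> H #> t"
proof -
  show "H \<noteq> H #> t"
  proof
    assume "H = H #> t"
    with rcos_self[OF t H] have "t \<in> H" by (simp only:)
    with \<open>t \<notin> H\<close> show False ..
  qed
  have "H #> a \<in> {H, H #> t}" if "a \<in> carrier G" for a
  proof -
    from cover that have a_cases: "a \<in> H \<union> (H #> t)" ..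
    show ?thesis
    proof (cases "a \<in> H")
      case True
      then have "H #> a = H" by (rule coset_join2[OF that H])
      then show ?thesis by simp
    next
      case False
      with a_cases have "a \<in> H #> t" by simp
      then have "H #> t = H #> a" by (rule repr_independence[OF _ t H])
      then show ?thesis by simp
    qed
  qed
  then have "rcosets H \<subseteq> {H, H #> t}"
    by (auto simp: RCOSETS_def)
  moreover have "H \<in> rcosets H" "H #> t \<in> rcosets H"
    using rcosetsI[of H \<one>] rcosetsI[OF _ t] H by (simp_all add: subgroup.subset)
  ultimately show "rcosets H = {H, H #> t}"
    by (intro subset_antisym) simp_all
qed

lemma iso_image_of_inj_hom:
  assumes H: "group H" and f: "f \<in> hom G H" and inj: "inj_on f (carrier G)"
  shows "H\<lparr>carrier := f ` carrier G\<rparr> \<cong> G"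
proof -
  interpret f: group_hom G H f
    using H f by (simp add: group_hom_def group_hom_axioms_def is_group)
  have "subgroup (f ` carrier G) H"
    by (rule f.img_is_subgroup)
  then have "subgroup_generated H (f ` carrier G) = H\<lparr>carrier := f ` carrier G\<rparr>"
    using subgroup.carrier_subgroup_generated_subgroup[of "f ` carrier G" H]
    by (simp add: subgroup_generated_def)
  moreover have "f \<in> iso G (subgroup_generated H (f ` carrier G))"
    by (simp add: iso_onto_image[OF H] mon_def f inj)
  ultimately have "G \<cong> H\<lparr>carrier := f ` carrier G\<rparr>"
    by (simp add: is_isoI)
  then show ?thesis
    by (rule iso_sym)
qed

end

section \<open>The integral Heisenberg group\<close>

type_synonym heis_coord = "int \<times> int \<times> int"

text \<open>\<open>(i, j, k)\<close> stands for \<open>a^i b^j [a,b]^k\<close>; the product rule comes from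
  \<open>b^j a^i' = a^i' b^j [a,b]^(-j i')\<close>.\<close>

fun heis_mult :: "heis_coord \<Rightarrow> heis_coord \<Rightarrow> heis_coord" where
  "heis_mult (i, j, k) (i', j', k') = (i + i', j + j', k + k' - j * i')"

definition Heis_model :: "heis_coord monoid" where
  "Heis_model = \<lparr>carrier = UNIV, mult = heis_mult, one = (0, 0, 0)\<rparr>"

definition heis_elem :: "('a, 'm) monoid_scheme \<Rightarrow> 'a \<Rightarrow> 'a \<Rightarrow> heis_coord \<Rightarrow> 'a" where
  "heis_elem G a b =
     (\<lambda>(i, j, k). a [^]\<^bsub>G\<^esub> i \<otimes>\<^bsub>G\<^esub> b [^]\<^bsub>G\<^esub> j \<otimes>\<^bsub>G\<^esub> commutator G a b [^]\<^bsub>G\<^esub> k)"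

lemma Heis_model_simps [simp]:
  "carrier Heis_model = UNIV" "x \<otimes>\<^bsub>Heis_model\<^esub> y = heis_mult x y" "\<one>\<^bsub>Heis_model\<^esub> = (0, 0, 0)"
  by (simp_all add: Heis_model_def)

lemma heis_mult_assoc: "heis_mult (heis_mult x y) z = heis_mult x (heis_mult y z)"
  by (cases x; cases y; cases z) (simp add: algebra_simps)

lemma group_Heis_model: "group Heis_model"
proof (rule groupI)
  fix x :: heis_coord
  obtain i j k where x: "x = (i, j, k)" by (cases x)
  show "\<exists>y\<in>carrier Heis_model. y \<otimes>\<^bsub>Heis_model\<^esub> x = \<one>\<^bsub>Heis_model\<^esub>"
    by (rule bexI[of _ "(- i, - j, - k - i * j)"]) (simp_all add: x algebra_simps)
qed (auto simp: heis_mult_assoc)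

lemma inv_Heis_model [simp]: "inv\<^bsub>Heis_model\<^esub> (i, j, k) = (- i, - j, - k - i * j)"
  by (rule group.inv_equality[OF group_Heis_model]) (simp_all add: algebra_simps)

lemma (in group) heis_elem_hom:
  assumes a: "a \<in> carrier G" and b: "b \<in> carrier G"
    and ac: "a \<otimes> commutator G a b = commutator G a b \<otimes> a"
    and bc: "b \<otimes> commutator G a b = commutator G a b \<otimes> b"
  shows "heis_elem G a b \<in> hom Heis_model G"
proof (rule homI)
  define c where "c = commutator G a b"
  have c: "c \<in> carrier G" using a b by (simp add: c_def)
  have "b \<otimes> a = inv c \<otimes> a \<otimes> b"
    using commutator_mult_swap[OF a b] a b c
    by (simp add: c_def[symmetric] inv_solve_left m_assoc)
  then have ba: "b [^] j \<otimes> a [^] i = c [^] (- (i * j)) \<otimes> a [^] i \<otimes> b [^] j" for i j :: int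
    using int_pow_commutation[of a b "inv c" j i] commute_inv[OF a c] commute_inv[OF b c]
      a b c ac bc
    by (simp add: c_def[symmetric] int_pow_inv int_pow_neg)
  have baz: "b [^] j \<otimes> (a [^] i \<otimes> z) = c [^] (- (i * j)) \<otimes> (a [^] i \<otimes> (b [^] j \<otimes> z))"
    if "z \<in> carrier G" for i j :: int and z
    using ba[of j i] a b c that by (simp add: m_assoc[symmetric])
  have ca: "c [^] n \<otimes> (a [^] m \<otimes> z) = a [^] m \<otimes> (c [^] n \<otimes> z)"
    if "z \<in> carrier G" for n m :: int and z
    using int_pows_commute[OF c a, of n m] ac a c that
    by (simp add: c_def[symmetric] m_assoc[symmetric])
  have cb: "c [^] n \<otimes> (b [^] m \<otimes> z) = b [^] m \<otimes> (c [^] n \<otimes> z)"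
    if "z \<in> carrier G" for n m :: int and z
    using int_pows_commute[OF c b, of n m] bc b c that
    by (simp add: c_def[symmetric] m_assoc[symmetric])
  fix x y :: heis_coord
  obtain i j k i' j' k' where xy: "x = (i, j, k)" "y = (i', j', k')" by (cases x, cases y)
  have "c [^] (k + k' - j * i') = c [^] (- (i' * j)) \<otimes> (c [^] k \<otimes> c [^] k')"
    using c by (simp add: int_pow_mult[symmetric] algebra_simps)
  moreover have "a [^] (i + i') = a [^] i \<otimes> a [^] i'" "b [^] (j + j') = b [^] j \<otimes> b [^] j'"
    using a b by (simp_all add: int_pow_mult)
  ultimately show "heis_elem G a b (x \<otimes>\<^bsub>Heis_model\<^esub> y) = heis_elem G a b x \<otimes> heis_elem G a b y"
    using a b c unfolding xy by (simp add: heis_elem_def c_def[symmetric] m_assoc baz ca cb)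
qed (auto simp: heis_elem_def a b)

abbreviation heis_a :: "gen2 word set" where "heis_a \<equiv> pres_gen Heis_rels G1"
abbreviation heis_b :: "gen2 word set" where "heis_b \<equiv> pres_gen Heis_rels G2"

lemma group_Heis: "group Heis"
  by (simp add: Heis_def group_presented_group)

lemma Heis_gens_closed: "heis_a \<in> carrier Heis" "heis_b \<in> carrier Heis"
  by (simp_all add: Heis_def carrier_presented_group)

lemma Heis_commutes_commutator:
  "heis_a \<otimes>\<^bsub>Heis\<^esub> commutator Heis heis_a heis_b = commutator Heis heis_a heis_b \<otimes>\<^bsub>Heis\<^esub> heis_a"
  "heis_b \<otimes>\<^bsub>Heis\<^esub> commutator Heis heis_a heis_b = commutator Heis heis_a heis_b \<otimes>\<^bsub>Heis\<^esub> heis_b"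
proof -
  interpret group Heis by (rule group_Heis)
  have gen: "pres_gen Heis_rels g \<in> carrier Heis" for g
    by (simp add: Heis_def carrier_presented_group)
  have "wcomm gw1 (wcomm gw1 gw2) \<in> Heis_rels" "wcomm gw2 (wcomm gw1 gw2) \<in> Heis_rels"
    by (simp_all add: Heis_rels_def)
  from this[THEN commute_of_wcomm_relator, folded Heis_def] show
    "heis_a \<otimes>\<^bsub>Heis\<^esub> commutator Heis heis_a heis_b = commutator Heis heis_a heis_b \<otimes>\<^bsub>Heis\<^esub> heis_a"
    "heis_b \<otimes>\<^bsub>Heis\<^esub> commutator Heis heis_a heis_b = commutator Heis heis_a heis_b \<otimes>\<^bsub>Heis\<^esub> heis_b"
    by (simp_all add: eval_word_wcomm gw1_def gw2_def gen)
qed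

definition heis_coords :: "gen2 word set \<Rightarrow> heis_coord" where
  "heis_coords = pres_lift Heis_model (case_gen2 (1, 0, 0) (0, 1, 0))"

lemma heis_coords_hom: "heis_coords \<in> hom Heis Heis_model"
  unfolding heis_coords_def Heis_def
  by (rule group.pres_lift_hom[OF group_Heis_model])
    (auto simp: Heis_rels_def wcomm_def winv_def gw1_def gw2_def split: gen2.split)

lemma heis_coords_gen: "heis_coords (pres_gen Heis_rels g) = case_gen2 (1, 0, 0) (0, 1, 0) g"
  unfolding heis_coords_def
  by (rule group.pres_lift_gen[OF group_Heis_model])
    (auto simp: Heis_rels_def wcomm_def winv_def gw1_def gw2_def split: gen2.split)

lemma heis_elem_heis_coords:
  assumes "x \<in> carrier Heis"
  shows "heis_elem Heis heis_a heis_b (heis_coords x) = x"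
proof -
  interpret Heis: group Heis by (rule group_Heis)
  have "heis_elem Heis heis_a heis_b \<circ> heis_coords \<in> hom Heis Heis"
    using heis_coords_hom Heis.heis_elem_hom[OF Heis_gens_closed Heis_commutes_commutator]
    by (rule hom_compose)
  moreover have "id \<in> hom Heis Heis"
    by (rule homI) auto
  moreover have "(heis_elem Heis heis_a heis_b \<circ> heis_coords) (pres_gen Heis_rels g) =
      id (pres_gen Heis_rels g)" for g
    using Heis_gens_closed by (cases g) (simp_all add: heis_coords_gen heis_elem_def)
  ultimately have "(heis_elem Heis heis_a heis_b \<circ> heis_coords) x = id x"
    using hom_presented_group_eqI[of Heis _ Heis_rels, folded Heis_def] group_Heis assms by blast
  then show ?thesis by simp
qed

lemma inj_on_heis_coords: "inj_on heis_coords (carrier Heis)"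
  by (metis heis_elem_heis_coords inj_onI)

section \<open>The group \<open>K\<^sub>2\<close>\<close>

text \<open>The semidirect product of \<open>Heis_model\<close> with \<open>\<int>/2\<close>, where the nontrivial element
  acts by \<open>heis_swap\<close>, the automorphism induced by \<open>a \<leftrightarrow> b\<close> (it inverts \<open>[a,b]\<close>).
  \<open>K\<^sub>2\<close> maps to it by \<open>x \<mapsto> a\<close>, \<open>t \<mapsto>\<close> the involution.\<close>

fun heis_swap :: "heis_coord \<Rightarrow> heis_coord" where
  "heis_swap (i, j, k) = (j, i, - k - i * j)"

fun K2_model_mult :: "heis_coord \<times> bool \<Rightarrow> heis_coord \<times> bool \<Rightarrow> heis_coord \<times> bool" where
  "K2_model_mult (p, s) (q, s') = (heis_mult p (if s then heis_swap q else q), s \<noteq> s')"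

definition K2_model :: "(heis_coord \<times> bool) monoid" where
  "K2_model = \<lparr>carrier = UNIV, mult = K2_model_mult, one = ((0, 0, 0), False)\<rparr>"

lemma K2_model_simps [simp]:
  "carrier K2_model = UNIV" "x \<otimes>\<^bsub>K2_model\<^esub> y = K2_model_mult x y"
  "\<one>\<^bsub>K2_model\<^esub> = ((0, 0, 0), False)"
  by (simp_all add: K2_model_def)

lemma heis_swap_mult: "heis_swap (heis_mult p q) = heis_mult (heis_swap p) (heis_swap q)"
  by (cases p; cases q) (simp add: algebra_simps)

lemma group_K2_model: "group K2_model"
proof (rule groupI)
  fix x :: "heis_coord \<times> bool"
  obtain i j k s where x: "x = ((i, j, k), s)" by (cases x) auto
  show "\<exists>y\<in>carrier K2_model. y \<otimes>\<^bsub>K2_model\<^esub> x = \<one>\<^bsub>K2_model\<^esub>"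
    by (rule bexI[of _ "(if s then (- j, - i, k) else (- i, - j, - k - i * j), s)"])
      (auto simp: x algebra_simps)
next
  fix x y z :: "heis_coord \<times> bool"
  show "x \<otimes>\<^bsub>K2_model\<^esub> y \<otimes>\<^bsub>K2_model\<^esub> z = x \<otimes>\<^bsub>K2_model\<^esub> (y \<otimes>\<^bsub>K2_model\<^esub> z)"
    by (cases x; cases y; cases z) (auto simp: heis_mult_assoc heis_swap_mult)
qed auto

lemma inv_K2_model [simp]:
  "inv\<^bsub>K2_model\<^esub> ((i, j, k), s) = (if s then (- j, - i, k) else (- i, - j, - k - i * j), s)"
  by (rule group.inv_equality[OF group_K2_model]) (auto simp: algebra_simps)

abbreviation K2_z :: "gen2 word set" where
  "K2_z \<equiv> K2_t \<otimes>\<^bsub>K2\<^esub> K2_x \<otimes>\<^bsub>K2\<^esub> inv\<^bsub>K2\<^esub> K2_t"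

abbreviation K2_H :: "gen2 word set set" where
  "K2_H \<equiv> generate K2 {K2_x, K2_z}"

lemma group_K2: "group K2"
  by (simp add: K2_def group_presented_group)

lemma K2_gens: "K2_x = pres_gen K2_rels G1" "K2_t = pres_gen K2_rels G2"
  by (simp_all add: K2_x_def K2_t_def gw1_def gw2_def)

lemma K2_gens_closed: "K2_x \<in> carrier K2" "K2_t \<in> carrier K2"
  by (simp_all add: K2_def K2_x_def K2_t_def carrier_presented_group)

lemma K2_z_closed: "K2_z \<in> carrier K2"
proof -
  interpret group K2 by (rule group_K2)
  show ?thesis using K2_gens_closed by simp
qed

lemma K2_t_involution: "K2_t \<otimes>\<^bsub>K2\<^esub> K2_t = \<one>\<^bsub>K2\<^esub>"
  using word_class_relator[of "gw2 @ gw2" K2_rels]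
  by (simp add: K2_def K2_rels_def K2_t_def word_class_mult)

lemma inv_K2_t: "inv\<^bsub>K2\<^esub> K2_t = K2_t"
  using group.inv_equality[OF group_K2 K2_t_involution] K2_gens_closed by simp

lemma K2_relation:
  "K2_x \<otimes>\<^bsub>K2\<^esub> (K2_z \<otimes>\<^bsub>K2\<^esub> K2_x \<otimes>\<^bsub>K2\<^esub> inv\<^bsub>K2\<^esub> K2_z)
   = K2_z \<otimes>\<^bsub>K2\<^esub> K2_x \<otimes>\<^bsub>K2\<^esub> inv\<^bsub>K2\<^esub> K2_z \<otimes>\<^bsub>K2\<^esub> K2_x"
proof -
  interpret group K2 by (rule group_K2)
  have "wcomm gw1 (gw2 @ gw1 @ winv gw2 @ gw1 @ gw2 @ winv gw1 @ winv gw2) \<in> K2_rels"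
    by (simp add: K2_rels_def)
  from commute_of_wcomm_relator[OF this, folded K2_def] show ?thesis
    using K2_gens_closed
    by (simp add: gw1_def gw2_def winv_def K2_gens[symmetric] m_assoc inv_mult_group)
qed

lemma K2_commutes_commutator:
  "K2_x \<otimes>\<^bsub>K2\<^esub> commutator K2 K2_x K2_z = commutator K2 K2_x K2_z \<otimes>\<^bsub>K2\<^esub> K2_x"
  "K2_z \<otimes>\<^bsub>K2\<^esub> commutator K2 K2_x K2_z = commutator K2 K2_x K2_z \<otimes>\<^bsub>K2\<^esub> K2_z"
  using group.commutator_commutes_of_involution[OF group_K2 K2_gens_closed K2_t_involution refl
      K2_relation] .

lemma K2_conj_t_mem_H:
  "h \<in> K2_H \<Longrightarrow> K2_t \<otimes>\<^bsub>K2\<^esub> h \<otimes>\<^bsub>K2\<^esub> inv\<^bsub>K2\<^esub> K2_t \<in> K2_H"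
proof -
  interpret K2: group K2 by (rule group_K2)
  interpret conj: group_hom K2 K2 "\<lambda>g. K2_t \<otimes>\<^bsub>K2\<^esub> g \<otimes>\<^bsub>K2\<^esub> inv\<^bsub>K2\<^esub> K2_t"
    using K2.conj_group_hom K2_gens_closed by blast
  have tt_cancel: "K2_t \<otimes>\<^bsub>K2\<^esub> (K2_t \<otimes>\<^bsub>K2\<^esub> y) = y" if "y \<in> carrier K2" for y
    using K2_gens_closed that by (simp add: K2_t_involution flip: K2.m_assoc)
  have "K2_t \<otimes>\<^bsub>K2\<^esub> K2_z \<otimes>\<^bsub>K2\<^esub> inv\<^bsub>K2\<^esub> K2_t = K2_x"
    using K2_gens_closed by (simp add: inv_K2_t K2.m_assoc K2_t_involution tt_cancel)
  then have "(\<lambda>g. K2_t \<otimes>\<^bsub>K2\<^esub> g \<otimes>\<^bsub>K2\<^esub> inv\<^bsub>K2\<^esub> K2_t) ` {K2_x, K2_z} = {K2_x, K2_z}"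
    by auto
  moreover assume "h \<in> K2_H"
  ultimately show ?thesis
    using conj.generate_img[of "{K2_x, K2_z}"] K2_gens_closed K2_z_closed by auto
qed

lemma K2_carrier_cover: "carrier K2 \<subseteq> K2_H \<union> (K2_H #>\<^bsub>K2\<^esub> K2_t)"
proof
  interpret K2: group K2 by (rule group_K2)
  have H: "subgroup K2_H K2"
    using K2_gens_closed K2_z_closed by (intro K2.generate_is_subgroup) auto
  have gens: "pres_gen K2_rels g \<in> K2_H \<union> {K2_t}"
    "inv\<^bsub>K2\<^esub> (pres_gen K2_rels g) \<in> K2_H \<union> {K2_t}" for g
    by (cases g; simp add: inv_K2_t generate.incl generate.inv flip: K2_gens)+
  have step: "g \<otimes>\<^bsub>K2\<^esub> y \<in> K2_H \<union> (K2_H #>\<^bsub>K2\<^esub> K2_t)"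
    if "g \<in> K2_H \<union> {K2_t}" "y \<in> K2_H \<union> (K2_H #>\<^bsub>K2\<^esub> K2_t)" for g y
    using K2.mult_mem_union_rcoset[OF H _ K2_t_involution K2_conj_t_mem_H that] K2_gens_closed
    by simp
  fix x assume "x \<in> carrier K2"
  then show "x \<in> K2_H \<union> (K2_H #>\<^bsub>K2\<^esub> K2_t)"
    unfolding K2_def
  proof (induction rule: presented_group_induct)
    case one
    then show ?case by (simp add: generate.one flip: K2_def)
  next
    case (gen g y)
    then show ?case using step gens by (simp flip: K2_def)
  next
    case (gen_inv g y)
    then show ?case using step gens by (simp flip: K2_def)
  qed
qed

definition Heis_to_K2 :: "gen2 word set \<Rightarrow> gen2 word set" where
  "Heis_to_K2 = pres_lift K2 (case_gen2 K2_x K2_z)"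

lemma Heis_to_K2_relators:
  "r \<in> Heis_rels \<Longrightarrow> eval_word K2 (case_gen2 K2_x K2_z) r = \<one>\<^bsub>K2\<^esub>"
proof -
  interpret group K2 by (rule group_K2)
  have "commutator K2 K2_x (commutator K2 K2_x K2_z) = \<one>\<^bsub>K2\<^esub>"
    "commutator K2 K2_z (commutator K2 K2_x K2_z) = \<one>\<^bsub>K2\<^esub>"
    using K2_gens_closed K2_z_closed K2_commutes_commutator
    by (simp_all add: commutator_eq_one_iff)
  moreover assume "r \<in> Heis_rels"
  ultimately show ?thesis
    using K2_gens_closed K2_z_closed
    by (auto simp: Heis_rels_def eval_word_wcomm gw1_def gw2_def split: gen2.split)
qed

lemma Heis_to_K2_hom: "Heis_to_K2 \<in> hom Heis K2"
  unfolding Heis_to_K2_def Heis_def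
  using K2_gens_closed K2_z_closed Heis_to_K2_relators
  by (intro group.pres_lift_hom[OF group_K2]) (auto split: gen2.split)

lemma Heis_to_K2_gen: "Heis_to_K2 (pres_gen Heis_rels g) = case_gen2 K2_x K2_z g"
  unfolding Heis_to_K2_def
  using K2_gens_closed K2_z_closed Heis_to_K2_relators
  by (intro group.pres_lift_gen[OF group_K2]) (auto split: gen2.split)

lemma range_gen2: "range h = {h G1, h G2}"
proof -
  have "(UNIV :: gen2 set) = {G1, G2}"
    using gen2.exhaust by auto
  then show ?thesis by (metis image_empty image_insert)
qed

lemma image_Heis_to_K2: "Heis_to_K2 ` carrier Heis = K2_H"
proof -
  interpret group_hom Heis K2 Heis_to_K2
    by (simp add: group_hom_def group_hom_axioms_def group_Heis group_K2 Heis_to_K2_hom)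
  have "carrier Heis = generate Heis {heis_a, heis_b}"
    using generate_presented_group[of Heis_rels] by (simp add: range_gen2 flip: Heis_def)
  moreover have "Heis_to_K2 ` {heis_a, heis_b} = {K2_x, K2_z}"
    by (simp add: Heis_to_K2_gen)
  ultimately show ?thesis
    using generate_img[of "{heis_a, heis_b}"] Heis_gens_closed by simp
qed

definition K2_coords :: "gen2 word set \<Rightarrow> heis_coord \<times> bool" where
  "K2_coords = pres_lift K2_model (case_gen2 ((1, 0, 0), False) ((0, 0, 0), True))"

lemma K2_coords_relators:
  "r \<in> K2_rels \<Longrightarrow>
   eval_word K2_model (case_gen2 ((1, 0, 0), False) ((0, 0, 0), True)) r = \<one>\<^bsub>K2_model\<^esub>"
  by (auto simp: K2_rels_def wcomm_def winv_def gw1_def gw2_def)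

lemma K2_coords_hom: "K2_coords \<in> hom K2 K2_model"
  unfolding K2_coords_def K2_def
  using K2_coords_relators by (intro group.pres_lift_hom[OF group_K2_model]) auto

lemma K2_coords_gen:
  "K2_coords (pres_gen K2_rels g) = case_gen2 ((1, 0, 0), False) ((0, 0, 0), True) g"
  unfolding K2_coords_def
  using K2_coords_relators by (intro group.pres_lift_gen[OF group_K2_model]) auto

lemma K2_coords_Heis_to_K2:
  assumes "x \<in> carrier Heis"
  shows "K2_coords (Heis_to_K2 x) = (heis_coords x, False)"
proof -
  interpret K2_coords: group_hom K2 K2_model K2_coords
    by (simp add: group_hom_def group_hom_axioms_def group_K2 group_K2_model K2_coords_hom)
  have "K2_coords \<circ> Heis_to_K2 \<in> hom Heis K2_model"
    using Heis_to_K2_hom K2_coords_hom by (rule hom_compose)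
  moreover have "(\<lambda>x. (heis_coords x, False)) \<in> hom Heis K2_model"
    using heis_coords_hom by (auto intro!: homI dest: hom_mult)
  moreover have "(K2_coords \<circ> Heis_to_K2) (pres_gen Heis_rels g) =
      (heis_coords (pres_gen Heis_rels g), False)" for g
    using K2_gens_closed
    by (cases g) (simp_all add: Heis_to_K2_gen heis_coords_gen K2_gens K2_coords_gen)
  ultimately have "(K2_coords \<circ> Heis_to_K2) x = (heis_coords x, False)"
    using hom_presented_group_eqI[of K2_model _ Heis_rels, folded Heis_def] group_K2_model assms
    by blast
  then show ?thesis by simp
qed

lemma inj_on_Heis_to_K2: "inj_on Heis_to_K2 (carrier Heis)"
  by (metis (no_types, lifting) K2_coords_Heis_to_K2 inj_on_def inj_on_heis_coords prod.inject)

lemma K2_t_notin_H: "K2_t \<notin> K2_H"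
proof
  assume "K2_t \<in> K2_H"
  then obtain h where "h \<in> carrier Heis" "K2_t = Heis_to_K2 h"
    by (auto simp flip: image_Heis_to_K2)
  then have "K2_coords K2_t = (heis_coords h, False)"
    using K2_coords_Heis_to_K2 by metis
  then show False
    by (simp add: K2_gens K2_coords_gen)
qed

theorem lemma4p2:
  shows "subgroup (generate K2 {K2_x, K2_t \<otimes>\<^bsub>K2\<^esub> K2_x \<otimes>\<^bsub>K2\<^esub> inv\<^bsub>K2\<^esub> K2_t}) K2
   \<and> K2\<lparr>carrier := generate K2 {K2_x, K2_t \<otimes>\<^bsub>K2\<^esub> K2_x \<otimes>\<^bsub>K2\<^esub> inv\<^bsub>K2\<^esub> K2_t}\<rparr> \<cong> Heis
   \<and> card (rcosets\<^bsub>K2\<^esub> (generate K2 {K2_x, K2_t \<otimes>\<^bsub>K2\<^esub> K2_x \<otimes>\<^bsub>K2\<^esub> inv\<^bsub>K2\<^esub> K2_t})) = 2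
   \<and> rcosets\<^bsub>K2\<^esub> (generate K2 {K2_x, K2_t \<otimes>\<^bsub>K2\<^esub> K2_x \<otimes>\<^bsub>K2\<^esub> inv\<^bsub>K2\<^esub> K2_t})
       = {generate K2 {K2_x, K2_t \<otimes>\<^bsub>K2\<^esub> K2_x \<otimes>\<^bsub>K2\<^esub> inv\<^bsub>K2\<^esub> K2_t} #>\<^bsub>K2\<^esub> \<one>\<^bsub>K2\<^esub>,
          generate K2 {K2_x, K2_t \<otimes>\<^bsub>K2\<^esub> K2_x \<otimes>\<^bsub>K2\<^esub> inv\<^bsub>K2\<^esub> K2_t} #>\<^bsub>K2\<^esub> K2_t}
   \<and> generate K2 {K2_x, K2_t \<otimes>\<^bsub>K2\<^esub> K2_x \<otimes>\<^bsub>K2\<^esub> inv\<^bsub>K2\<^esub> K2_t} #>\<^bsub>K2\<^esub> \<one>\<^bsub>K2\<^esub>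
       \<noteq> generate K2 {K2_x, K2_t \<otimes>\<^bsub>K2\<^esub> K2_x \<otimes>\<^bsub>K2\<^esub> inv\<^bsub>K2\<^esub> K2_t} #>\<^bsub>K2\<^esub> K2_t"
proof -
  interpret K2: group K2 by (rule group_K2)
  have H: "subgroup K2_H K2"
    using K2_gens_closed K2_z_closed by (intro K2.generate_is_subgroup) auto
  have iso: "K2\<lparr>carrier := K2_H\<rparr> \<cong> Heis"
    using group.iso_image_of_inj_hom[OF group_Heis group_K2 Heis_to_K2_hom inj_on_Heis_to_K2]
    by (simp add: image_Heis_to_K2)
  have "rcosets\<^bsub>K2\<^esub> K2_H = {K2_H, K2_H #>\<^bsub>K2\<^esub> K2_t}" "K2_H \<noteq> K2_H #>\<^bsub>K2\<^esub> K2_t"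
    using K2.rcosets_eq_pair[OF H _ K2_t_notin_H K2_carrier_cover] K2_gens_closed by auto
  moreover have "K2_H #>\<^bsub>K2\<^esub> \<one>\<^bsub>K2\<^esub> = K2_H"
    using H by (simp add: subgroup.subset)
  ultimately show ?thesis
    using H iso by simp
qed

end
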